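(* In the SODA algorithm described in the context, the communication cost of a successful write operation is at most $5f^2$, i.e., $O(f^2)$.
   Context: System model: asynchronous message passing with writers $\mathcal{W}$, readers $\mathcal{R}$ and $n$ servers ordered $s_1<\dots<s_n$; reliable point-to-point channels between every client and server and every two servers; crash failures only; any number of clients and at most $f$ servers crash, $1\le f\le (n-1)/2$. Coding: values of size 1 unit; an $[n,k]$ MDS code with $k=n-f$, encoder $\Phi$ producing coded elements $\Phi_s(v)$, $s\in\mathcal{S}$, each of size $1/k$. SODA write by writer $w$ of value $v$: (get-tag phase) query all servers for their locally stored tags, wait for a majority of responses, let $t_{max}$ be the largest; (put phase) form tag $t_w=(t_{max}.z+1,w)$ and invoke md-value-send$(t_w,v)$, then wait for acknowledgments from $k$ servers. md-value-send$(t_w,v)$: the writer sends the uncoded $(t_w,v)$ to servers $s_1,\dots,s_{f+1}$ in order; each $s_i$ ($i\le f+1$), on first receipt, sends $(t_w,v)$ to $s_{i+1},\dots,s_{f+1}$, sends $(t_w,\Phi_{s'}(v))$ to every server $s'\notin\{s_1,\dots,s_{f+1}\}$, and delivers $(t_w,\Phi_{s_i}(v))$ locally; each other server delivers the coded element it receives. A server that delivers a coded element stores it if its tag exceeds the stored tag, forwards it to currently registered readers with smaller or equal requested tags (this is accounted to reads), and acknowledges to the writer. Communication cost of an operation: total size of the value/coded-element data carried in all messages sent as part of the operation, normalized by the value size; metadata (tags, ids, acknowledgments) is ignored. *)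

theory Defs
  imports Complex_Main
begin

text \<open>Nodes involved in the put phase of a SODA write: the writer and the
servers s_1, ..., s_n (server s_i is represented as Srv i).\<close>
datatype node = Writer | Srv nat

datatype payload = Uncoded | Coded

type_synonym message = "node \<times> node \<times> payload"

text \<open>All data-carrying messages that md-value-send(t_w, v) may send (each at
most once, since servers forward only on first receipt):
 writer -> s_1..s_{f+1} uncoded;
 s_i (i \<le> f+1) -> s_{i+1}..s_{f+1} uncoded;
 s_i (i \<le> f+1) -> every s' not in {s_1..s_{f+1}} a coded element.
Local delivery is not a message; acknowledgments/tags carry no data; the
forwarding to readers is accounted to reads.\<close>
definition md_value_send_msgs :: "nat \<Rightarrow> nat \<Rightarrow> message set" where
  "md_value_send_msgs n f =
     {(Writer, Srv j, Uncoded) | j. 1 \<le> j \<and> j \<le> f + 1}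
   \<union> {(Srv i, Srv j, Uncoded) | i j. 1 \<le> i \<and> i < j \<and> j \<le> f + 1}
   \<union> {(Srv i, Srv j, Coded) | i j. 1 \<le> i \<and> i \<le> f + 1 \<and> f + 1 < j \<and> j \<le> n}"

text \<open>Size of a message's data, normalized by the value size: the value has
size 1, a coded element of the [n, k] MDS code with k = n - f has size 1/k.\<close>
fun msg_size :: "nat \<Rightarrow> nat \<Rightarrow> message \<Rightarrow> real" where
  "msg_size n f (_, _, Uncoded) = 1"
| "msg_size n f (_, _, Coded) = 1 / real (n - f)"

text \<open>Communication cost of a write whose put phase actually sent the set M
of data messages (the get-tag phase carries only metadata).\<close>
definition write_comm_cost :: "nat \<Rightarrow> nat \<Rightarrow> message set \<Rightarrow> real" where
  "write_comm_cost n f M = (\<Sum>m\<in>M. msg_size n f m)"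

end

theory Submission
  imports Defs
begin

text \<open>A complete put phase sends (f+1)(f+2)/2 uncoded copies of the value (one from the writer to
each of s_1, ..., s_{f+1}, and one along each pair s_i < s_j among them) and (f+1)(n-f-1) coded
elements of size 1/(n-f), which together weigh less than f+1. Any actual run sends a subset of these messages, so its cost is at most
(f+1)(f+4)/2, which is bounded by 5f^2 as soon as f \<ge> 1.\<close>

lemma finite_less_pairs: "finite {(i, j). 1 \<le> i \<and> i < j \<and> j \<le> (m::nat)}"
  by (rule finite_subset[of _ "{..m} \<times> {..m}"]) auto

lemma card_less_pairs: "2 * card {(i, j). 1 \<le> i \<and> i < j \<and> j \<le> (m::nat)} = m * (m - 1)"
proof (induction m)
  case (Suc m)
  have split: "{(i, j). 1 \<le> i \<and> i < j \<and> j \<le> Suc m}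
      = {(i, j). 1 \<le> i \<and> i < j \<and> j \<le> m} \<union> (\<lambda>i. (i, Suc m)) ` {1..m}"
    by auto
  have "card {(i, j). 1 \<le> i \<and> i < j \<and> j \<le> Suc m}
      = card {(i, j). 1 \<le> i \<and> i < j \<and> j \<le> m} + m"
    unfolding split using finite_less_pairs[of m]
    by (subst card_Un_disjoint) (auto simp: card_image inj_on_def)
  then show ?case
    using Suc.IH by (cases m) (simp_all add: algebra_simps)
qed (simp add: card_eq_0_iff)

lemma md_value_send_msgs_eq:
  "md_value_send_msgs n f =
     (\<lambda>j. (Writer, Srv j, Uncoded)) ` {1..f + 1}
   \<union> (\<lambda>(i, j). (Srv i, Srv j, Uncoded)) ` {(i, j). 1 \<le> i \<and> i < j \<and> j \<le> f + 1}
   \<union> (\<lambda>(i, j). (Srv i, Srv j, Coded)) ` ({1..f + 1} \<times> {f + 2..n})"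
  unfolding md_value_send_msgs_def by (auto simp: image_iff)

lemma finite_md_value_send_msgs: "finite (md_value_send_msgs n f)"
  unfolding md_value_send_msgs_eq using finite_less_pairs[of "f + 1"] by simp

lemma write_comm_cost_md_value_send_msgs:
  "write_comm_cost n f (md_value_send_msgs n f)
     = real ((f + 1) * (f + 2)) / 2 + real ((f + 1) * (n - f - 1)) / real (n - f)"
proof -
  let ?W = "(\<lambda>j. (Writer, Srv j, Uncoded)) ` {1..f + 1}"
  let ?U = "(\<lambda>(i, j). (Srv i, Srv j, Uncoded)) ` {(i, j). 1 \<le> i \<and> i < j \<and> j \<le> f + 1}"
  let ?C = "(\<lambda>(i, j). (Srv i, Srv j, Coded)) ` ({1..f + 1} \<times> {f + 2..n})"
  have W: "sum (msg_size n f) ?W = real (f + 1)"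
    by (subst sum.reindex) (auto simp: inj_on_def)
  have "sum (msg_size n f) ?U = real (card {(i, j). 1 \<le> i \<and> i < j \<and> j \<le> f + 1})"
    by (subst sum.reindex) (auto simp: inj_on_def case_prod_beta)
  then have U: "sum (msg_size n f) ?U = real (f + 1) * real f / 2"
    using arg_cong[OF card_less_pairs[of "f + 1"], of real] by (simp add: algebra_simps)
  have C: "sum (msg_size n f) ?C = real ((f + 1) * (n - f - 1)) / real (n - f)"
    by (subst sum.reindex) (auto simp: inj_on_def case_prod_beta)
  have "write_comm_cost n f (md_value_send_msgs n f)
      = sum (msg_size n f) ?W + sum (msg_size n f) ?U + sum (msg_size n f) ?C"
    unfolding write_comm_cost_def md_value_send_msgs_eq
    using finite_less_pairs[of "f + 1"] by (subst sum.union_disjoint; auto)+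
  also have "\<dots> = real ((f + 1) * (f + 2)) / 2 + real ((f + 1) * (n - f - 1)) / real (n - f)"
    unfolding W U C by (simp add: field_simps)
  finally show ?thesis .
qed

lemma write_comm_cost_mono:
  assumes "M \<subseteq> M'" and "finite M'"
  shows "write_comm_cost n f M \<le> write_comm_cost n f M'"
proof -
  have "0 \<le> msg_size n f m" for m
    by (cases m; cases "snd (snd m)") simp_all
  then show ?thesis
    unfolding write_comm_cost_def using assms by (intro sum_mono2) auto
qed

theorem theorem6:
  fixes n f :: nat and M :: "message set"
  assumes "1 \<le> f" and "2 * f + 1 \<le> n"
    and "M \<subseteq> md_value_send_msgs n f"
  shows "write_comm_cost n f M \<le> 5 * real f ^ 2"
proof -
  have "real ((f + 1) * (n - f - 1)) \<le> real (f + 1) * real (n - f)"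
    by (simp only: of_nat_mult[symmetric] of_nat_le_iff) (rule mult_le_mono2, simp)
  then have coded: "real ((f + 1) * (n - f - 1)) / real (n - f) \<le> real (f + 1)"
    using assms(2) by (simp add: divide_le_eq)
  have "write_comm_cost n f M \<le> write_comm_cost n f (md_value_send_msgs n f)"
    using assms(3) finite_md_value_send_msgs by (rule write_comm_cost_mono)
  also have "\<dots> \<le> real ((f + 1) * (f + 2)) / 2 + real (f + 1)"
    unfolding write_comm_cost_md_value_send_msgs using coded by simp
  also have "\<dots> \<le> 5 * real f ^ 2"
  proof -
    have "0 \<le> (real f - 1) * (9 * real f + 4)"
      using assms(1) by simp
    then show ?thesis
      by (simp add: power2_eq_square field_simps)
  qed
  finally show ?thesis .
qed

end
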